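(* Let $X$ be a finite-dimensional real Banach space with a skipped 1-unconditional basis $(e_k)_{k=1}^{2N+1}$ and biorthogonal functionals $(e_k^* )_{k=1}^{2N+1}$. Suppose $\mathrm{ubc}(e^*_{2j-1})_{j=1}^{N+1}=\mu>1$. Then $\mathrm{ubc}(e_j^* )_{j=1}^{2N+1}\ge 1+2(\mu-1)$.
   Context: A basic sequence $(e_k)_{k=1}^N$ ($1\le N\le\infty$) is skipped $\lambda$-unconditional if whenever $0=m_0<m_1<\dots<m_n<\infty$ with $m_j-m_{j-1}\ge2$ for $1\le j\le n$, and $y_j\in[e_i]_{i=m_{j-1}+1}^{m_j-1}$ (spans taken only over indices $i\le N$), then $\|\sum_{j=1}^n\epsilon_jy_j\|\le\lambda\|\sum_{j=1}^ny_j\|$ for all signs $\epsilon_j=\pm1$. For a finite linearly independent sequence $(f_j)_{j\in A}$, $\mathrm{ubc}(f_j)_{j\in A}$ (unconditional basis constant) is the least $K$ such that $\|\sum_{j\in A}\epsilon_ja_jf_j\|\le K\|\sum_{j\in A}a_jf_j\|$ for all scalars $a_j$ and signs $\epsilon_j=\pm1$. *)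

theory Defs
  imports "HOL-Analysis.Analysis"
begin

definition lin_indep_family :: "('i \<Rightarrow> 'b::real_vector) \<Rightarrow> 'i set \<Rightarrow> bool" where
  "lin_indep_family f A \<longleftrightarrow>
     (\<forall>c. (\<Sum>j\<in>A. c j *\<^sub>R f j) = 0 \<longrightarrow> (\<forall>j\<in>A. c j = 0))"

definition ubc :: "('i \<Rightarrow> 'b::real_normed_vector) \<Rightarrow> 'i set \<Rightarrow> real" where
  "ubc f A = Inf {K. \<forall>a \<epsilon>. (\<forall>j\<in>A. \<epsilon> j = 1 \<or> \<epsilon> j = -1) \<longrightarrow>
      norm (\<Sum>j\<in>A. (\<epsilon> j * a j) *\<^sub>R f j) \<le> K * norm (\<Sum>j\<in>A. a j *\<^sub>R f j)}"

definition skipped_unconditional :: "real \<Rightarrow> (nat \<Rightarrow> 'a::real_normed_vector) \<Rightarrow> nat \<Rightarrow> bool" where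
  "skipped_unconditional lam e L \<longleftrightarrow>
     (\<forall>n (m::nat \<Rightarrow> nat) (y::nat \<Rightarrow> 'a) (\<epsilon>::nat \<Rightarrow> real).
        m 0 = 0 \<longrightarrow>
        (\<forall>j\<in>{1..n}. m j \<ge> m (j - 1) + 2) \<longrightarrow>
        (\<forall>j\<in>{1..n}. y j \<in> span (e ` {i. m (j - 1) < i \<and> i < m j \<and> 1 \<le> i \<and> i \<le> L})) \<longrightarrow>
        (\<forall>j\<in>{1..n}. \<epsilon> j = 1 \<or> \<epsilon> j = -1) \<longrightarrow>
        norm (\<Sum>j=1..n. \<epsilon> j *\<^sub>R y j) \<le> lam * norm (\<Sum>j=1..n. y j))"

end

theory Submission
  imports Defs
begin

text \<open>
  Fix an admissible constant K for all functionals and an odd combination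
  f = sum a_j estar(2j-1) with sign-changed version g.  Skipped unconditionality
  makes sign changes on the odd vectors norm-nonincreasing, so by duality
  |g y| <= norm f * norm y on the span of the odd vectors.  A coordinatewise
  Hahn-Banach extension along the even vectors yields G with norm G <= norm f and
  G = g on the odd vectors.  Then 2g - G is G with its even coordinates
  sign-flipped, whence 2 norm g <= (K + 1) norm f, i.e. (K + 1)/2 is admissible
  for the odd functionals.
\<close>

definition biorthogonal :: "('i \<Rightarrow> 'a::real_normed_vector) \<Rightarrow> ('i \<Rightarrow> ('a \<Rightarrow>\<^sub>L real)) \<Rightarrow> 'i set \<Rightarrow> bool" where
  "biorthogonal e estar I \<longleftrightarrow> (\<forall>k\<in>I. \<forall>i\<in>I. estar k (e i) = (if k = i then 1 else 0))"

definition ubc_const :: "('i \<Rightarrow> 'b::real_normed_vector) \<Rightarrow> 'i set \<Rightarrow> real \<Rightarrow> bool" where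
  "ubc_const f A K \<longleftrightarrow> (\<forall>a \<epsilon>. (\<forall>j\<in>A. \<epsilon> j = 1 \<or> \<epsilon> j = -1) \<longrightarrow>
      norm (\<Sum>j\<in>A. (\<epsilon> j * a j) *\<^sub>R f j) \<le> K * norm (\<Sum>j\<in>A. a j *\<^sub>R f j))"

lemma ubc_eq_Inf: "ubc f A = Inf (Collect (ubc_const f A))"
  unfolding ubc_def ubc_const_def by simp

lemma biorthogonal_nonzero:
  assumes "biorthogonal e estar I" and "k \<in> I"
  shows "estar k \<noteq> 0"
proof -
  have "estar k (e k) = 1"
    using assms by (simp add: biorthogonal_def)
  then show ?thesis
    by (metis blinfun.zero_left zero_neq_one)
qed

lemma biorthogonal_subfamily:
  assumes "biorthogonal e estar I" and "inj_on h J" and "h ` J \<subseteq> I"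
  shows "biorthogonal (\<lambda>j. e (h j)) (\<lambda>j. estar (h j)) J"
  using assms unfolding biorthogonal_def inj_on_def by (auto simp: subset_iff)

lemma biorthogonal_coeff:
  assumes bi: "biorthogonal e estar I" and fin: "finite I" and k: "k \<in> I"
  shows "estar k (\<Sum>i\<in>I. c i *\<^sub>R e i) = c k"
proof -
  have "estar k (\<Sum>i\<in>I. c i *\<^sub>R e i) = (\<Sum>i\<in>I. c i * estar k (e i))"
    by (simp add: blinfun.sum_right blinfun.scaleR_right)
  also have "\<dots> = (\<Sum>i\<in>I. if i = k then c i else 0)"
    using bi k by (intro sum.cong) (auto simp: biorthogonal_def)
  also have "\<dots> = c k"
    using fin k by simp
  finally show ?thesis .
qed

lemma biorthogonal_dual_coeff:
  assumes bi: "biorthogonal e estar I" and fin: "finite I" and k: "k \<in> I"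
  shows "(\<Sum>i\<in>I. c i *\<^sub>R estar i) (e k) = c k"
proof -
  have "(\<Sum>i\<in>I. c i *\<^sub>R estar i) (e k) = (\<Sum>i\<in>I. if i = k then c i else 0)"
    using bi k by (auto simp: blinfun.sum_left blinfun.scaleR_left biorthogonal_def intro: sum.cong)
  also have "\<dots> = c k"
    using fin k by simp
  finally show ?thesis .
qed

lemma biorthogonal_expansion:
  assumes bi: "biorthogonal e estar I" and fin: "finite I" and x: "x \<in> span (e ` I)"
  shows "x = (\<Sum>i\<in>I. estar i x *\<^sub>R e i)"
proof -
  have lin: "linear (\<lambda>x. \<Sum>i\<in>I. estar i x *\<^sub>R e i)"
    by (intro bounded_linear.linear bounded_linear_intros blinfun.bounded_linear_right)
  have basis: "(\<Sum>i\<in>I. estar i (e k) *\<^sub>R e i) = e k" if "k \<in> I" for k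
  proof -
    have "(\<Sum>i\<in>I. estar i (e k) *\<^sub>R e i) = (\<Sum>i\<in>I. if i = k then e i else 0)"
      using bi that by (intro sum.cong) (auto simp: biorthogonal_def)
    then show ?thesis
      using fin that by simp
  qed
  have "id x = (\<Sum>i\<in>I. estar i x *\<^sub>R e i)"
    by (rule linear_eq_on_span[OF linear_id lin _ x]) (use basis in auto)
  then show ?thesis
    by simp
qed

lemma dual_expansion:
  fixes \<phi> :: "'a::real_normed_vector \<Rightarrow>\<^sub>L real"
  assumes bi: "biorthogonal e estar I" and fin: "finite I" and spans: "span (e ` I) = UNIV"
  shows "\<phi> = (\<Sum>i\<in>I. \<phi> (e i) *\<^sub>R estar i)"
proof (rule blinfun_eqI)
  fix x
  have "\<phi> x = \<phi> (\<Sum>i\<in>I. estar i x *\<^sub>R e i)"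
    using biorthogonal_expansion[OF bi fin] spans by simp
  also have "\<dots> = (\<Sum>i\<in>I. \<phi> (e i) *\<^sub>R estar i) x"
    by (simp add: blinfun.sum_right blinfun.scaleR_right blinfun.sum_left blinfun.scaleR_left mult.commute)
  finally show "\<phi> x = (\<Sum>i\<in>I. \<phi> (e i) *\<^sub>R estar i) x" .
qed

text \<open>In a skipped unconditional basis the odd-indexed vectors e(1), e(3), ... lie in
  separate blocks (the even indices are the skipped ones), so sign changes on them
  cost at most the skipped constant.\<close>
lemma skipped_odd_sign_flip:
  fixes e :: "nat \<Rightarrow> 'a::real_normed_vector"
  assumes skipped: "skipped_unconditional lam e L" and n: "2 * n \<le> L + 1"
    and signs: "\<forall>j\<in>{1..n}. \<epsilon> j = 1 \<or> \<epsilon> j = -1"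
  shows "norm (\<Sum>j\<in>{1..n}. (\<epsilon> j * c j) *\<^sub>R e (2*j - 1)) \<le> lam * norm (\<Sum>j\<in>{1..n}. c j *\<^sub>R e (2*j - 1))"
proof -
  define y where "y j = c j *\<^sub>R e (2*j - 1)" for j
  have blocks: "y j \<in> span (e ` {i. 2 * (j - 1) < i \<and> i < 2 * j \<and> 1 \<le> i \<and> i \<le> L})"
    if "j \<in> {1..n}" for j
  proof -
    have "2*j - 1 \<in> {i. 2 * (j - 1) < i \<and> i < 2 * j \<and> 1 \<le> i \<and> i \<le> L}"
      using that n by auto
    then show ?thesis
      unfolding y_def by (intro span_mul span_base imageI)
  qed
  have gaps: "\<forall>j\<in>{1..n}. 2 * (j - 1) + 2 \<le> 2 * j"
    by auto
  have "norm (\<Sum>j=1..n. \<epsilon> j *\<^sub>R y j) \<le> lam * norm (\<Sum>j=1..n. y j)"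
    using skipped[unfolded skipped_unconditional_def, rule_format, of "\<lambda>j. 2 * j" n y \<epsilon>]
      gaps blocks signs by simp
  then show ?thesis
    unfolding y_def by simp
qed

text \<open>Proof: flip the signs of y instead.\<close>
lemma dual_sign_flip_bound:
  fixes u :: "'i \<Rightarrow> 'a::real_normed_vector" and ustar :: "'i \<Rightarrow> ('a \<Rightarrow>\<^sub>L real)"
  assumes bi: "biorthogonal u ustar J" and fin: "finite J"
    and flip: "\<And>c. norm (\<Sum>j\<in>J. (\<epsilon> j * c j) *\<^sub>R u j) \<le> norm (\<Sum>j\<in>J. c j *\<^sub>R u j)"
    and y: "y \<in> span (u ` J)"
  shows "\<bar>(\<Sum>j\<in>J. (\<epsilon> j * a j) *\<^sub>R ustar j) y\<bar> \<le> norm (\<Sum>j\<in>J. a j *\<^sub>R ustar j) * norm y"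
proof -
  define f where "f = (\<Sum>j\<in>J. a j *\<^sub>R ustar j)"
  define y' where "y' = (\<Sum>j\<in>J. (\<epsilon> j * ustar j y) *\<^sub>R u j)"
  have "(\<Sum>j\<in>J. (\<epsilon> j * a j) *\<^sub>R ustar j) y = (\<Sum>j\<in>J. a j * ustar j y')"
    unfolding y'_def using biorthogonal_coeff[OF bi fin]
    by (simp add: blinfun.sum_left blinfun.scaleR_left mult_ac)
  also have "\<dots> = f y'"
    unfolding f_def by (simp add: blinfun.sum_left blinfun.scaleR_left)
  finally have at_flipped: "\<bar>(\<Sum>j\<in>J. (\<epsilon> j * a j) *\<^sub>R ustar j) y\<bar> \<le> norm f * norm y'"
    using norm_blinfun[of f y'] by simp
  have "norm y' \<le> norm y"
    using flip[of "\<lambda>j. ustar j y"] biorthogonal_expansion[OF bi fin y] unfolding y'_def by simp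
  then show ?thesis
    using at_flipped unfolding f_def by (meson mult_left_mono norm_ge_zero order_trans)
qed

lemma skipped_odd_dual_bound:
  fixes e :: "nat \<Rightarrow> 'a::real_normed_vector" and estar :: "nat \<Rightarrow> ('a \<Rightarrow>\<^sub>L real)"
  assumes skipped: "skipped_unconditional 1 e (2*N+1)" and bi: "biorthogonal e estar {1..2*N+1}"
    and signs: "\<forall>j\<in>{1..N+1}. \<epsilon> j = 1 \<or> \<epsilon> j = -1"
    and y: "y \<in> span (e ` (\<lambda>j. 2*j - 1) ` {1..N+1})"
  shows "\<bar>(\<Sum>j\<in>{1..N+1}. (\<epsilon> j * a j) *\<^sub>R estar (2*j - 1)) y\<bar>
    \<le> norm (\<Sum>j\<in>{1..N+1}. a j *\<^sub>R estar (2*j - 1)) * norm y"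
proof -
  have "inj_on (\<lambda>j::nat. 2*j - 1) {1..N+1}" "(\<lambda>j::nat. 2*j - 1) ` {1..N+1} \<subseteq> {1..2*N+1}"
    by (auto simp: inj_on_def)
  then have bi_odd: "biorthogonal (\<lambda>j. e (2*j - 1)) (\<lambda>j. estar (2*j - 1)) {1..N+1}"
    by (rule biorthogonal_subfamily[OF bi])
  have y_odd: "y \<in> span ((\<lambda>j. e (2*j - 1)) ` {1..N+1})"
    using y by (simp add: image_image)
  show ?thesis
    by (rule dual_sign_flip_bound[OF bi_odd _ _ y_odd])
      (use skipped_odd_sign_flip[OF skipped _ signs] in auto)
qed

text \<open>The one-dimensional Hahn-Banach step.  For a functional bounded by M on a
  subspace W there is a value c at the new vector z compatible with the bound:
  the lower constraints never exceed the upper ones by the triangle inequality.\<close>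
lemma extension_value_interval:
  fixes \<phi> :: "'a::real_normed_vector \<Rightarrow>\<^sub>L real"
  assumes W: "subspace W" and bd: "\<forall>w\<in>W. \<bar>\<phi> w\<bar> \<le> M * norm w" and M: "M \<ge> 0"
  shows "\<exists>c. \<forall>w\<in>W. \<phi> w - M * norm (w - z) \<le> c \<and> c \<le> M * norm (w + z) - \<phi> w"
proof -
  have compatible: "\<phi> w1 - M * norm (w1 - z) \<le> M * norm (w2 + z) - \<phi> w2"
    if "w1 \<in> W" "w2 \<in> W" for w1 w2
  proof -
    have "\<phi> w1 + \<phi> w2 = \<phi> (w1 + w2)"
      by (simp add: blinfun.add_right)
    also have "\<dots> \<le> M * norm (w1 + w2)"
      using bd W that by (meson abs_le_D1 subspace_add)
    also have "\<dots> \<le> M * (norm (w1 - z) + norm (w2 + z))"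
      using norm_triangle_ineq[of "w1 - z" "w2 + z"] M by (simp add: mult_left_mono)
    finally show ?thesis
      by (simp add: algebra_simps)
  qed
  define A where "A = {\<phi> w - M * norm (w - z) | w. w \<in> W}"
  have "0 \<in> W"
    using W subspace_0 by blast
  then have A: "A \<noteq> {}" "bdd_above A"
    unfolding A_def bdd_above_def using compatible by blast+
  show ?thesis
  proof (intro exI ballI conjI)
    fix w assume "w \<in> W"
    then show "\<phi> w - M * norm (w - z) \<le> Sup A"
      using A by (intro cSup_upper) (auto simp: A_def)
    show "Sup A \<le> M * norm (w + z) - \<phi> w"
      using A \<open>w \<in> W\<close> compatible by (intro cSup_least) (auto simp: A_def)
  qed
qed

text \<open>Such a value c gives the one-sided bound on all of W + span z, by homogeneity.\<close>
lemma extension_value_bound: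
  fixes \<phi> :: "'a::real_normed_vector \<Rightarrow>\<^sub>L real"
  assumes W: "subspace W" and bd: "\<forall>w\<in>W. \<bar>\<phi> w\<bar> \<le> M * norm w"
    and c: "\<forall>w\<in>W. \<phi> w - M * norm (w - z) \<le> c \<and> c \<le> M * norm (w + z) - \<phi> w"
    and w: "w \<in> W"
  shows "\<phi> w + t * c \<le> M * norm (w + t *\<^sub>R z)"
proof (cases t "0::real" rule: linorder_cases)
  case less
  define s where "s = - t"
  have s: "s > 0"
    using less s_def by simp
  have "(1 / s) *\<^sub>R w \<in> W"
    using W w by (simp add: subspace_scale)
  then have "s * (\<phi> ((1 / s) *\<^sub>R w) - M * norm ((1 / s) *\<^sub>R w - z)) \<le> s * c"
    using c s by (simp add: mult_left_mono)
  also have "s * (\<phi> ((1 / s) *\<^sub>R w) - M * norm ((1 / s) *\<^sub>R w - z)) = \<phi> w - M * norm (s *\<^sub>R ((1 / s) *\<^sub>R w - z))"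
    using s by (simp add: blinfun.scaleR_right right_diff_distrib)
  also have "s *\<^sub>R ((1 / s) *\<^sub>R w - z) = w + t *\<^sub>R z"
    using s by (simp add: s_def algebra_simps)
  finally show ?thesis
    by (simp add: s_def)
next
  case equal
  then show ?thesis
    using bd w by (simp add: abs_le_iff)
next
  case greater
  have "(1 / t) *\<^sub>R w \<in> W"
    using W w by (simp add: subspace_scale)
  then have "t * c \<le> t * (M * norm ((1 / t) *\<^sub>R w + z) - \<phi> ((1 / t) *\<^sub>R w))"
    using c greater by (simp add: mult_left_mono)
  also have "\<dots> = M * norm (t *\<^sub>R ((1 / t) *\<^sub>R w + z)) - \<phi> w"
    using greater by (simp add: blinfun.scaleR_right right_diff_distrib)
  also have "t *\<^sub>R ((1 / t) *\<^sub>R w + z) = w + t *\<^sub>R z"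
    using greater by (simp add: algebra_simps)
  finally show ?thesis
    by simp
qed

lemma extension_one_step:
  fixes \<phi> \<psi> :: "'a::real_normed_vector \<Rightarrow>\<^sub>L real"
  assumes W: "subspace W" and bd: "\<forall>w\<in>W. \<bar>\<phi> w\<bar> \<le> M * norm w" and M: "M \<ge> 0"
    and van: "\<forall>w\<in>W. \<psi> w = 0" and z: "\<psi> z = 1"
  shows "\<exists>b. \<forall>x\<in>span (insert z W). \<bar>\<phi> x + b * \<psi> x\<bar> \<le> M * norm x"
proof -
  obtain c where c: "\<forall>w\<in>W. \<phi> w - M * norm (w - z) \<le> c \<and> c \<le> M * norm (w + z) - \<phi> w"
    using extension_value_interval[OF W bd M] by blast
  show ?thesis
  proof (intro exI ballI)
    fix x assume "x \<in> span (insert z W)"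
    then obtain t where "x - t *\<^sub>R z \<in> W"
      unfolding span_breakdown_eq using W span_eq_iff by blast
    then obtain w where w: "w \<in> W" and x: "x = w + t *\<^sub>R z"
      by (metis add.commute diff_add_cancel)
    have at_x: "\<phi> x + (c - \<phi> z) * \<psi> x = \<phi> w + t * c"
      using van w z unfolding x by (simp add: blinfun.add_right blinfun.scaleR_right algebra_simps)
    have upper: "\<phi> w + t * c \<le> M * norm x"
      unfolding x by (rule extension_value_bound[OF W bd c w])
    have "\<phi> (- w) + (- t) * c \<le> M * norm (- w + (- t) *\<^sub>R z)"
      using W w by (intro extension_value_bound[OF W bd c]) (simp add: subspace_neg)
    also have "- w + (- t) *\<^sub>R z = - x"
      unfolding x by simp
    finally have lower: "- (\<phi> w + t * c) \<le> M * norm x"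
      by (simp add: blinfun.minus_right)
    show "\<bar>\<phi> x + (c - \<phi> z) * \<psi> x\<bar> \<le> M * norm x"
      using at_x upper lower by linarith
  qed
qed

lemma biorthogonal_norm_preserving_extension:
  fixes e :: "'i \<Rightarrow> 'a::real_normed_vector" and estar :: "'i \<Rightarrow> ('a \<Rightarrow>\<^sub>L real)"
    and \<phi> :: "'a \<Rightarrow>\<^sub>L real"
  assumes bi: "biorthogonal e estar I" and fin: "finite I" and A: "A \<subseteq> I" and M: "M \<ge> 0"
    and bd: "\<forall>x\<in>span (e ` A). \<bar>\<phi> x\<bar> \<le> M * norm x"
  shows "\<exists>G::'a \<Rightarrow>\<^sub>L real. (\<forall>x\<in>span (e ` I). \<bar>G x\<bar> \<le> M * norm x) \<and> (\<forall>i\<in>A. G (e i) = \<phi> (e i))"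
proof -
  have "finite B \<Longrightarrow> B \<subseteq> I - A \<Longrightarrow>
    \<exists>G::'a \<Rightarrow>\<^sub>L real. (\<forall>x\<in>span (e ` (A \<union> B)). \<bar>G x\<bar> \<le> M * norm x) \<and> (\<forall>i\<in>A. G (e i) = \<phi> (e i))" for B
  proof (induction B rule: finite_induct)
    case empty
    then show ?case
      using bd by auto
  next
    case (insert b B)
    then obtain G :: "'a \<Rightarrow>\<^sub>L real" where G_bd: "\<forall>x\<in>span (e ` (A \<union> B)). \<bar>G x\<bar> \<le> M * norm x"
      and G_A: "\<forall>i\<in>A. G (e i) = \<phi> (e i)"
      by auto
    have b: "b \<in> I" "b \<notin> A \<union> B" "A \<union> B \<subseteq> I"
      using insert A by auto
    have off_b: "estar b (e i) = 0" if "i \<in> A \<union> B" for i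
      using bi b that unfolding biorthogonal_def by (metis subsetD)
    then have van: "\<forall>w\<in>span (e ` (A \<union> B)). estar b w = 0"
      using linear_eq_0_on_span[OF bounded_linear.linear[OF blinfun.bounded_linear_right]] by blast
    have one: "estar b (e b) = 1"
      using bi b unfolding biorthogonal_def by simp
    obtain \<beta> where \<beta>: "\<forall>x\<in>span (insert (e b) (span (e ` (A \<union> B)))).
        \<bar>G x + \<beta> * estar b x\<bar> \<le> M * norm x"
      using extension_one_step[OF subspace_span G_bd M van one] by blast
    have "span (e ` (A \<union> insert b B)) \<subseteq> span (insert (e b) (span (e ` (A \<union> B))))"
      by (intro span_mono) (auto intro: span_base)
    then have "\<forall>x\<in>span (e ` (A \<union> insert b B)). \<bar>(G + \<beta> *\<^sub>R estar b) x\<bar> \<le> M * norm x"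
      using \<beta> by (auto simp: blinfun.add_left blinfun.scaleR_left)
    moreover have "\<forall>i\<in>A. (G + \<beta> *\<^sub>R estar b) (e i) = \<phi> (e i)"
      using G_A off_b
      by (simp add: blinfun.add_left blinfun.scaleR_left)
    ultimately show ?case
      by blast
  qed
  from this[of "I - A"] show ?thesis
    using fin A by (simp add: Un_absorb1)
qed

text \<open>Admissible constants of a family with a nonzero member are at least 1
  (take a single nonzero coefficient and all signs +1).\<close>
lemma ubc_const_ge_one:
  fixes f :: "'i \<Rightarrow> 'b::real_normed_vector"
  assumes K: "ubc_const f A K" and fin: "finite A" and i: "i \<in> A" and nz: "f i \<noteq> 0"
  shows "1 \<le> K"
proof -
  have unit: "(\<Sum>j\<in>A. (if j = i then 1 else 0) *\<^sub>R f j) = f i"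
    using fin i by (simp add: if_distrib[of "\<lambda>c. c *\<^sub>R _"] cong: if_cong)
  have "norm (f i) \<le> K * norm (f i)"
    using K[unfolded ubc_const_def, rule_format, of "\<lambda>_. 1" "\<lambda>j. if j = i then 1 else 0"] unit
    by simp
  then show ?thesis
    using nz by simp
qed

text \<open>The functionals of a finite biorthogonal system have some admissible constant,
  so their unconditional basis constant is an infimum over a nonempty set.\<close>
lemma biorthogonal_ubc_const_exists:
  fixes e :: "'i \<Rightarrow> 'a::real_normed_vector" and estar :: "'i \<Rightarrow> ('a \<Rightarrow>\<^sub>L real)"
  assumes bi: "biorthogonal e estar I" and fin: "finite I"
  shows "ubc_const estar I (\<Sum>k\<in>I. norm (e k) * norm (estar k))"
  unfolding ubc_const_def
proof (intro allI impI)
  fix a \<epsilon> :: "'i \<Rightarrow> real"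
  assume signs: "\<forall>j\<in>I. \<epsilon> j = 1 \<or> \<epsilon> j = -1"
  define F where "F = (\<Sum>j\<in>I. a j *\<^sub>R estar j)"
  have coeff: "\<bar>a k\<bar> \<le> norm F * norm (e k)" if "k \<in> I" for k
  proof -
    have "a k = F (e k)"
      unfolding F_def using biorthogonal_dual_coeff[OF bi fin that] by simp
    then show ?thesis
      using norm_blinfun[of F "e k"] by simp
  qed
  have "norm (\<Sum>j\<in>I. (\<epsilon> j * a j) *\<^sub>R estar j) \<le> (\<Sum>j\<in>I. \<bar>a j\<bar> * norm (estar j))"
    using signs by (intro order_trans[OF norm_sum] sum_mono) (auto simp: abs_mult)
  also have "\<dots> \<le> (\<Sum>j\<in>I. norm F * (norm (e j) * norm (estar j)))"
    using coeff by (intro sum_mono) (simp add: mult_right_mono flip: mult.assoc)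
  finally show "norm (\<Sum>j\<in>I. (\<epsilon> j * a j) *\<^sub>R estar j) \<le> (\<Sum>k\<in>I. norm (e k) * norm (estar k)) * norm F"
    by (simp add: sum_distrib_left mult.commute)
qed

text \<open>Averaging identity: if g agrees with G on e(P) and vanishes on the remaining
  e(i), then 2g - G is G with the coordinates outside P sign-flipped, hence
  2 norm g <= norm (2g - G) + norm G <= (K + 1) norm G.\<close>
lemma sign_averaging_bound:
  fixes e :: "'i \<Rightarrow> 'a::real_normed_vector" and estar :: "'i \<Rightarrow> ('a \<Rightarrow>\<^sub>L real)"
    and g G :: "'a \<Rightarrow>\<^sub>L real"
  assumes bi: "biorthogonal e estar I" and fin: "finite I" and spans: "span (e ` I) = UNIV"
    and K: "ubc_const estar I K"
    and agree: "\<forall>i\<in>P. g (e i) = G (e i)" and vanish: "\<forall>i\<in>I - P. g (e i) = 0"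
  shows "2 * norm g \<le> (K + 1) * norm G"
proof -
  define \<delta> where "\<delta> i = (if i \<in> P then 1 else -1 :: real)" for i
  have G_exp: "G = (\<Sum>i\<in>I. G (e i) *\<^sub>R estar i)"
    by (rule dual_expansion[OF bi fin spans])
  have "2 *\<^sub>R g - G = (\<Sum>i\<in>I. (2 *\<^sub>R g - G) (e i) *\<^sub>R estar i)"
    by (rule dual_expansion[OF bi fin spans])
  also have "\<dots> = (\<Sum>i\<in>I. (\<delta> i * G (e i)) *\<^sub>R estar i)"
    using agree vanish by (intro sum.cong) (auto simp: \<delta>_def blinfun.diff_left blinfun.scaleR_left)
  finally have "norm (2 *\<^sub>R g - G) \<le> K * norm G"
    using K[unfolded ubc_const_def, rule_format, of \<delta> "\<lambda>i. G (e i)"] G_exp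
    by (simp add: \<delta>_def)
  then have "norm (2 *\<^sub>R g) \<le> K * norm G + norm G"
    using norm_triangle_ineq[of "2 *\<^sub>R g - G" G] by simp
  then show ?thesis
    by (simp add: algebra_simps)
qed

text \<open>The sign-changed
  odd combination g is bounded by norm f on the odd span (skipped
  unconditionality), extends to G with norm G <= norm f, and the averaging
  bound finishes.\<close>
lemma odd_subfamily_constant:
  fixes e :: "nat \<Rightarrow> 'a::real_normed_vector" and estar :: "nat \<Rightarrow> ('a \<Rightarrow>\<^sub>L real)"
  assumes skipped: "skipped_unconditional 1 e (2*N+1)" and bi: "biorthogonal e estar {1..2*N+1}"
    and spans: "span (e ` {1..2*N+1}) = UNIV" and K: "ubc_const estar {1..2*N+1} K"
  shows "ubc_const (\<lambda>j. estar (2*j - 1)) {1..N+1} ((K + 1) / 2)"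
  unfolding ubc_const_def
proof (intro allI impI)
  fix a \<epsilon> :: "nat \<Rightarrow> real"
  assume signs: "\<forall>j\<in>{1..N+1}. \<epsilon> j = 1 \<or> \<epsilon> j = -1"
  define f where "f = (\<Sum>j\<in>{1..N+1}. a j *\<^sub>R estar (2*j - 1))"
  define g where "g = (\<Sum>j\<in>{1..N+1}. (\<epsilon> j * a j) *\<^sub>R estar (2*j - 1))"
  define Od where "Od = (\<lambda>j. 2*j - 1) ` {1..N+1::nat}"
  have Od_sub: "Od \<subseteq> {1..2*N+1}"
    by (auto simp: Od_def)
  have odd_bd: "\<forall>y\<in>span (e ` Od). \<bar>g y\<bar> \<le> norm f * norm y"
    unfolding f_def g_def Od_def using skipped_odd_dual_bound[OF skipped bi signs] by blast
  obtain G :: "'a \<Rightarrow>\<^sub>L real" where G_bd: "\<forall>x\<in>span (e ` {1..2*N+1}). \<bar>G x\<bar> \<le> norm f * norm x"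
    and agree: "\<forall>i\<in>Od. G (e i) = g (e i)"
    using biorthogonal_norm_preserving_extension[OF bi _ Od_sub norm_ge_zero odd_bd] by auto
  have G_norm: "norm G \<le> norm f"
    using G_bd spans by (intro norm_blinfun_bound) auto
  have vanish: "\<forall>i\<in>{1..2*N+1} - Od. g (e i) = 0"
  proof
    fix i assume i: "i \<in> {1..2*N+1} - Od"
    have "estar (2*j - 1) (e i) = 0" if j: "j \<in> {1..N+1}" for j
    proof -
      have "2*j - 1 \<in> {1..2*N+1}" "2*j - 1 \<noteq> i"
        using i j by (auto simp: Od_def)
      then show ?thesis
        using bi i by (simp add: biorthogonal_def)
    qed
    then show "g (e i) = 0"
      unfolding g_def blinfun.sum_left by (intro sum.neutral) (simp add: blinfun.scaleR_left)
  qed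
  have "1 \<le> K"
    using ubc_const_ge_one[OF K _ _ biorthogonal_nonzero[OF bi, of 1]] by simp
  have "2 * norm g \<le> (K + 1) * norm G"
    by (rule sign_averaging_bound[OF bi _ spans K]) (use agree vanish in auto)
  also have "\<dots> \<le> (K + 1) * norm f"
    using G_norm \<open>1 \<le> K\<close> by (simp add: mult_left_mono)
  finally show "norm (\<Sum>j\<in>{1..N+1}. (\<epsilon> j * a j) *\<^sub>R estar (2*j - 1)) \<le> (K + 1) / 2 * norm (\<Sum>j\<in>{1..N+1}. a j *\<^sub>R estar (2*j - 1))"
    unfolding f_def g_def by simp
qed

text \<open>Taking infima in the core estimate gives mu <= (K + 1)/2 for every admissible K,
  i.e. ubc estar >= 2 mu - 1.\<close>
theorem lemma5p2:
  fixes e :: "nat \<Rightarrow> 'a::banach"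
    and estar :: "nat \<Rightarrow> ('a \<Rightarrow>\<^sub>L real)"
    and N :: nat and \<mu> :: real
  assumes indep: "lin_indep_family e {1..2*N+1}"
    and spans: "span (e ` {1..2*N+1}) = UNIV"
    and skipped: "skipped_unconditional 1 e (2*N+1)"
    and biorth: "\<forall>k\<in>{1..2*N+1}. \<forall>i\<in>{1..2*N+1}. estar k (e i) = (if k = i then 1 else 0)"
    and mu_def: "ubc (\<lambda>j. estar (2*j - 1)) {1..N+1} = \<mu>"
    and mu_gt: "\<mu> > 1"
  shows "ubc estar {1..2*N+1} \<ge> 1 + 2 * (\<mu> - 1)"
proof -
  have bi: "biorthogonal e estar {1..2*N+1}"
    using biorth by (simp add: biorthogonal_def)
  have "estar 1 \<noteq> 0"
    using biorthogonal_nonzero[OF bi] by simp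
  then have odd_bdd: "bdd_below (Collect (ubc_const (\<lambda>j. estar (2*j - 1)) {1..N+1}))"
    using ubc_const_ge_one[of "\<lambda>j. estar (2*j - 1)" "{1..N+1}" _ 1] by (intro bdd_belowI) auto
  have "1 + 2 * (\<mu> - 1) \<le> K" if "ubc_const estar {1..2*N+1} K" for K
  proof -
    have "\<mu> \<le> (K + 1) / 2"
      unfolding mu_def[symmetric] ubc_eq_Inf
      by (intro cInf_lower[OF _ odd_bdd] CollectI odd_subfamily_constant[OF skipped bi spans that])
    then show ?thesis
      by simp
  qed
  moreover have "Collect (ubc_const estar {1..2*N+1}) \<noteq> {}"
    using biorthogonal_ubc_const_exists[OF bi] by auto
  ultimately show ?thesis
    unfolding ubc_eq_Inf by (intro cInf_greatest) auto
qed

end
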